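(* Every $\Delta$-matroid representable over a finite field of characteristic two is strong.
   Context: A $\Delta$-matroid is a pair $(E,\mathcal{B})$, $E$ finite, $\mathcal{B}$ a nonempty family of subsets, such that for all $B,B'\in\mathcal{B}$ and $x\in B\triangle B'$ there is $y\in B\triangle B'$ with $B\triangle\{x,y\}\in\mathcal{B}$; it is strong if such $y$ can always be chosen with both $B\triangle\{x,y\},B'\triangle\{x,y\}\in\mathcal{B}$. For a symmetric or skew-symmetric matrix $\mathbf{A}$ over a field $K$ indexed by $E$, $D(\mathbf{A})=(E,\{I\subseteq E:\mathbf{A}[I]\text{ nonsingular}\})$ (the empty principal submatrix counts as nonsingular). For $X\subseteq E$, the twist $D*X$ has bases $\{B\triangle X:B\in\mathcal{B}\}$. $D$ is representable over $K$ if $D=D(\mathbf{A})*X$ for some symmetric or skew-symmetric matrix $\mathbf{A}$ over $K$ and some $X\subseteq E$. *)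

theory Defs
  imports Main "HOL-Combinatorics.Permutations"
begin

definition symdiff :: "'a set \<Rightarrow> 'a set \<Rightarrow> 'a set" (infixl \<open>\<triangle>\<close> 65) where
  "A \<triangle> B = (A - B) \<union> (B - A)"

definition delta_matroid :: "'a set \<Rightarrow> 'a set set \<Rightarrow> bool" where
  "delta_matroid E Bs \<longleftrightarrow> finite E \<and> Bs \<noteq> {} \<and> (\<forall>B\<in>Bs. B \<subseteq> E) \<and>
     (\<forall>B\<in>Bs. \<forall>B'\<in>Bs. \<forall>x\<in>B \<triangle> B'. \<exists>y\<in>B \<triangle> B'. B \<triangle> {x, y} \<in> Bs)"

definition strong_delta_matroid :: "'a set \<Rightarrow> 'a set set \<Rightarrow> bool" where
  "strong_delta_matroid E Bs \<longleftrightarrow> finite E \<and> Bs \<noteq> {} \<and> (\<forall>B\<in>Bs. B \<subseteq> E) \<and>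
     (\<forall>B\<in>Bs. \<forall>B'\<in>Bs. \<forall>x\<in>B \<triangle> B'. \<exists>y\<in>B \<triangle> B'.
        B \<triangle> {x, y} \<in> Bs \<and> B' \<triangle> {x, y} \<in> Bs)"

text \<open>Determinant of the principal submatrix A[I] (Leibniz formula over the
  finite index set I); the empty principal submatrix has determinant 1.\<close>
definition principal_det :: "('a \<Rightarrow> 'a \<Rightarrow> 'k::comm_ring_1) \<Rightarrow> 'a set \<Rightarrow> 'k" where
  "principal_det A I = (\<Sum>p\<in>{p. p permutes I}. of_int (sign p) * (\<Prod>i\<in>I. A i (p i)))"

definition symmetric_on :: "'a set \<Rightarrow> ('a \<Rightarrow> 'a \<Rightarrow> 'k) \<Rightarrow> bool" where
  "symmetric_on E A \<longleftrightarrow> (\<forall>i\<in>E. \<forall>j\<in>E. A i j = A j i)"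

definition skew_symmetric_on :: "'a set \<Rightarrow> ('a \<Rightarrow> 'a \<Rightarrow> 'k::ring_1) \<Rightarrow> bool" where
  "skew_symmetric_on E A \<longleftrightarrow> (\<forall>i\<in>E. \<forall>j\<in>E. A i j = - A j i) \<and> (\<forall>i\<in>E. A i i = 0)"

definition DA_bases :: "'a set \<Rightarrow> ('a \<Rightarrow> 'a \<Rightarrow> 'k::comm_ring_1) \<Rightarrow> 'a set set" where
  "DA_bases E A = {I. I \<subseteq> E \<and> principal_det A I \<noteq> 0}"

definition twist :: "'a set set \<Rightarrow> 'a set \<Rightarrow> 'a set set" where
  "twist Bs X = (\<lambda>B. B \<triangle> X) ` Bs"

definition representable_over :: "'k::field itself \<Rightarrow> 'a set \<Rightarrow> 'a set set \<Rightarrow> bool" where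
  "representable_over _ E Bs \<longleftrightarrow>
     (\<exists>(A::'a \<Rightarrow> 'a \<Rightarrow> 'k) X. X \<subseteq> E \<and> (symmetric_on E A \<or> skew_symmetric_on E A) \<and>
        Bs = twist (DA_bases E A) X)"

end

theory Submission
  imports Defs "Jordan_Normal_Form.Determinant"
begin

(* In characteristic 2 a skew-symmetric matrix is symmetric, determinants carry no signs, and
   twisting preserves strong exchange. So it suffices to show: if A is symmetric, A[I] and A[J]
   are nonsingular and x \<in> I \<triangle> J, then some y \<in> I \<triangle> J makes both A[I \<triangle> {x,y}] and A[J \<triangle> {x,y}]
   nonsingular.
   Pivoting on I gives a symmetric P with det A[I \<triangle> W] = det A[I] * det P[W], similarly Q for J,
   and on U = I \<triangle> J the matrices P and Q are inverse to each other. The claim thus becomes one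
   about 2x2 principal minors of mutually inverse symmetric matrices; its only nontrivial case
   (P_xx \<noteq> 0 = Q_xx) follows from the characteristic-2 identity c^T P c = \<Sum>k. P_kk c_k^2 for
   the column c of Q at x. *)

section \<open>Characteristic two\<close>

lemma char2_add_self:
  assumes "CHAR('k::ring_1) = 2"
  shows "(x::'k) + x = 0"
proof -
  have "(2::'k) = 0" by (metis assms of_nat_CHAR of_nat_numeral)
  then show ?thesis by (metis mult_2 mult_zero_left)
qed

lemma char2_uminus:
  assumes "CHAR('k::ring_1) = 2"
  shows "- (x::'k) = x"
  using char2_add_self[OF assms, of x] by (simp add: add_eq_0_iff2)

lemma char2_of_int_sign:
  assumes "CHAR('k::ring_1) = 2"
  shows "(of_int (sign p) :: 'k) = 1"
  using char2_uminus[OF assms, of 1] by (auto simp: sign_def)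

lemma skew_symmetric_on_imp_symmetric_on_char2:
  assumes "CHAR('k::ring_1) = 2" and "skew_symmetric_on E (A::'a \<Rightarrow> 'a \<Rightarrow> 'k)"
  shows "symmetric_on E A"
  using assms char2_uminus[OF assms(1)] unfolding symmetric_on_def skew_symmetric_on_def by metis

lemma double_sum_symmetric_char2:
  assumes c2: "CHAR('k::comm_ring_1) = 2" and "finite U"
    and "\<And>k i. k \<in> U \<Longrightarrow> i \<in> U \<Longrightarrow> f k i = f i k"
  shows "(\<Sum>k\<in>U. \<Sum>i\<in>U. f k i) = (\<Sum>k\<in>U. (f k k :: 'k))"
  using assms(2,3)
proof (induction U rule: finite_induct)
  case empty
  then show ?case by simp
next
  case (insert z U)
  have IH: "(\<Sum>k\<in>U. \<Sum>i\<in>U. f k i) = (\<Sum>k\<in>U. f k k)" using insert by auto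
  have sym: "(\<Sum>k\<in>U. f k z) = (\<Sum>k\<in>U. f z k)" using insert.prems by (intro sum.cong) auto
  have "(\<Sum>k\<in>insert z U. \<Sum>i\<in>insert z U. f k i)
      = f z z + (\<Sum>i\<in>U. f z i) + ((\<Sum>k\<in>U. f k z) + (\<Sum>k\<in>U. \<Sum>i\<in>U. f k i))"
    using insert.hyps by (simp add: sum.distrib algebra_simps)
  also have "\<dots> = f z z + (\<Sum>k\<in>U. f k k) + ((\<Sum>i\<in>U. f z i) + (\<Sum>i\<in>U. f z i))"
    unfolding sym IH by (simp add: algebra_simps)
  also have "\<dots> = f z z + (\<Sum>k\<in>U. f k k)" using char2_add_self[OF c2] by simp
  finally show ?case using insert.hyps by simp
qed

lemma square_sum_char2:
  assumes "CHAR('k::comm_ring_1) = 2" and "finite U"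
  shows "(\<Sum>k\<in>U. f k)\<^sup>2 = (\<Sum>k\<in>U. (f k :: 'k)\<^sup>2)"
proof -
  have "(\<Sum>k\<in>U. f k)\<^sup>2 = (\<Sum>k\<in>U. \<Sum>i\<in>U. f k * f i)"
    by (simp add: power2_eq_square sum_product)
  also have "\<dots> = (\<Sum>k\<in>U. f k * f k)"
    by (rule double_sum_symmetric_char2[OF assms]) (simp add: mult.commute)
  finally show ?thesis by (simp add: power2_eq_square)
qed

lemma quadratic_form_char2:
  assumes "CHAR('k::comm_ring_1) = 2" and "finite U"
    and "\<And>i j. i \<in> U \<Longrightarrow> j \<in> U \<Longrightarrow> a i j = a j i"
  shows "(\<Sum>k\<in>U. \<Sum>i\<in>U. c k * a k i * c i) = (\<Sum>k\<in>U. a k k * (c k :: 'k)\<^sup>2)"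
proof -
  have "(\<Sum>k\<in>U. \<Sum>i\<in>U. c k * a k i * c i) = (\<Sum>k\<in>U. c k * a k k * c k)"
    by (rule double_sum_symmetric_char2[OF assms(1,2)]) (simp add: assms(3) mult.commute)
  then show ?thesis by (simp add: power2_eq_square ac_simps)
qed

section \<open>Principal minors\<close>

lemma principal_det_char2:
  assumes "CHAR('k::comm_ring_1) = 2"
  shows "principal_det (A::'a \<Rightarrow> 'a \<Rightarrow> 'k) I = (\<Sum>p\<in>{p. p permutes I}. \<Prod>i\<in>I. A i (p i))"
  unfolding principal_det_def char2_of_int_sign[OF assms] by simp

text \<open>The identity holds in every characteristic; characteristic 2 merely spares the signs of
  the conjugated permutations.\<close>

lemma principal_det_image_char2:
  assumes c2: "CHAR('k::comm_ring_1) = 2" and "inj_on h I"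
  shows "principal_det (A::'a \<Rightarrow> 'a \<Rightarrow> 'k) (h ` I) = principal_det (\<lambda>i j. A (h i) (h j)) I"
proof -
  have h: "bij_betw h I (h ` I)" using assms(2) by (rule inj_on_imp_bij_betw)
  let ?conj = "\<lambda>\<pi> x. if x \<in> h ` I then h (\<pi> (inv_into I h x)) else x"
  have "(\<Sum>p\<in>{p. p permutes h ` I}. \<Prod>i\<in>h ` I. A i (p i))
      = (\<Sum>\<pi>\<in>{\<pi>. \<pi> permutes I}. \<Prod>i\<in>h ` I. A i (?conj \<pi> i))"
    by (rule sum.reindex_bij_betw[OF bij_betw_permutations[OF h], symmetric])
  also have "\<dots> = (\<Sum>\<pi>\<in>{\<pi>. \<pi> permutes I}. \<Prod>i\<in>I. A (h i) (h (\<pi> i)))"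
  proof (rule sum.cong[OF refl])
    fix \<pi>
    have "(\<Prod>i\<in>h ` I. A i (?conj \<pi> i)) = (\<Prod>i\<in>I. A (h i) (?conj \<pi> (h i)))"
      by (rule prod.reindex_bij_betw[OF h, symmetric])
    also have "\<dots> = (\<Prod>i\<in>I. A (h i) (h (\<pi> i)))"
      using h by (intro prod.cong) (auto simp: bij_betw_inv_into_left)
    finally show "(\<Prod>i\<in>h ` I. A i (?conj \<pi> i)) = (\<Prod>i\<in>I. A (h i) (h (\<pi> i)))" .
  qed
  finally show ?thesis unfolding principal_det_char2[OF c2] .
qed

lemma principal_det_singleton: "principal_det (A::'a \<Rightarrow> 'a \<Rightarrow> 'k::comm_ring_1) {x} = A x x"
  unfolding principal_det_def by (simp add: permutes_sing)

lemma principal_det_doubleton_char2: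
  assumes c2: "CHAR('k::comm_ring_1) = 2" and "x \<noteq> y"
  shows "principal_det (A::'a \<Rightarrow> 'a \<Rightarrow> 'k) {x, y} = A x x * A y y + A x y * A y x"
proof -
  have perms: "{p. p permutes {x, y}} = {id, Transposition.transpose x y}"
    using permutes_doubleton_iff[of _ x y] by blast
  have "id \<noteq> Transposition.transpose x y"
    using assms(2) by (metis id_apply transpose_apply_first)
  then show ?thesis
    unfolding principal_det_char2[OF c2] perms using assms(2) by simp
qed

lemma permutes_subset_if_moved_into:
  assumes p: "p permutes V" and "W \<subseteq> V" "finite W"
    and moved: "\<And>i. i \<in> V \<Longrightarrow> p i \<notin> W \<Longrightarrow> p i = i"
  shows "p permutes W"
proof (rule permutes_superset[OF p])
  have "p ` W \<subseteq> W" using moved assms(2) by fastforce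
  then have image: "p ` W = W"
    using assms(3) permutes_inj_on[OF p] by (simp add: endo_inj_surj)
  fix i assume i: "i \<in> V - W"
  have "p i \<notin> W"
  proof
    assume "p i \<in> W"
    then obtain w where "w \<in> W" "p i = p w" using image by (metis imageE)
    with i show False using permutes_inj[OF p] by (auto dest: injD)
  qed
  with moved i show "p i = i" by blast
qed

lemma principal_det_identity_cols_outside:
  assumes "finite V" "W \<subseteq> V"
  shows "principal_det (\<lambda>i j. if j \<in> W then C i j else if i = j then 1 else 0) V
    = principal_det (C::'a \<Rightarrow> 'a \<Rightarrow> 'k::comm_ring_1) W"
proof -
  let ?M = "\<lambda>i j. if j \<in> W then C i j else if i = j then 1 else 0"
  let ?t = "\<lambda>p. of_int (sign p) * (\<Prod>i\<in>V. ?M i (p i)) :: 'k"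
  have fin: "finite {p. p permutes V}" using assms(1) by (simp add: finite_permutations)
  have sub: "{p. p permutes W} \<subseteq> {p. p permutes V}" using assms(2) permutes_subset by blast
  have "?t p = 0" if p: "p permutes V" "\<not> p permutes W" for p
  proof -
    obtain i where "i \<in> V" "p i \<notin> W" "p i \<noteq> i"
      using permutes_subset_if_moved_into[OF p(1) assms(2) finite_subset[OF assms(2,1)]] p(2) by blast
    then have "(\<Prod>i\<in>V. ?M i (p i)) = 0"
      using assms(1) by (intro prod_zero bexI[of _ i]) auto
    then show ?thesis by simp
  qed
  then have "(\<Sum>p\<in>{p. p permutes V}. ?t p) = (\<Sum>p\<in>{p. p permutes W}. ?t p)"
    by (intro sum.mono_neutral_right[OF fin sub]) blast
  also have "\<dots> = (\<Sum>p\<in>{p. p permutes W}. of_int (sign p) * (\<Prod>i\<in>W. C i (p i)))"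
  proof (rule sum.cong[OF refl])
    fix p assume "p \<in> {p. p permutes W}"
    then have pW: "p permutes W" by simp
    have "(\<Prod>i\<in>V. ?M i (p i)) = (\<Prod>i\<in>W. ?M i (p i)) * (\<Prod>i\<in>V - W. ?M i (p i))"
      using prod.subset_diff[OF assms(2,1)] by (simp add: mult.commute)
    also have "(\<Prod>i\<in>V - W. ?M i (p i)) = 1"
      using pW by (intro prod.neutral) (auto simp: permutes_not_in)
    also have "(\<Prod>i\<in>W. ?M i (p i)) = (\<Prod>i\<in>W. C i (p i))"
      using pW by (intro prod.cong) (auto simp: permutes_in_image)
    finally show "?t p = of_int (sign p) * (\<Prod>i\<in>W. C i (p i))" by simp
  qed
  finally show ?thesis unfolding principal_det_def .
qed

section \<open>Principal pivoting\<close>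

definition select_cols_mat :: "nat \<Rightarrow> (nat \<Rightarrow> nat \<Rightarrow> 'k::comm_ring_1) \<Rightarrow> nat set \<Rightarrow> 'k mat" where
  "select_cols_mat n A S = mat n n (\<lambda>(i, j). if j \<in> S then A i j else if i = j then 1 else 0)"

lemma select_cols_mat_carrier [simp]: "select_cols_mat n A S \<in> carrier_mat n n"
  unfolding select_cols_mat_def by simp

lemma dim_select_cols_mat [simp]:
  "dim_row (select_cols_mat n A S) = n" "dim_col (select_cols_mat n A S) = n"
  unfolding select_cols_mat_def by simp_all

lemma index_select_cols_mat:
  "i < n \<Longrightarrow> j < n \<Longrightarrow>
    select_cols_mat n A S $$ (i, j) = (if j \<in> S then A i j else if i = j then 1 else 0)"
  unfolding select_cols_mat_def by simp

lemma det_mat_eq_principal_det: "det (mat n n f) = principal_det (\<lambda>i j. f (i, j)) {0..<n}"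
  unfolding det_def principal_det_def
  by (auto intro!: sum.cong prod.cong simp: permutes_in_image)

lemma det_select_cols_mat: "S \<subseteq> {0..<n} \<Longrightarrow> det (select_cols_mat n A S) = principal_det A S"
  unfolding select_cols_mat_def det_mat_eq_principal_det
  by (simp add: principal_det_identity_cols_outside)

lemma index_mult_mat_sum:
  assumes "A \<in> carrier_mat n n" "B \<in> carrier_mat n n" "i < n" "j < n"
  shows "(A * B) $$ (i, j) = (\<Sum>k\<in>{0..<n}. A $$ (i, k) * B $$ (k, j))"
  using assms by (simp add: scalar_prod_def)

lemma inverse_mat_if_det_nonzero:
  assumes "(M::'k::field mat) \<in> carrier_mat n n" "det M \<noteq> 0"
  obtains Q where "Q \<in> carrier_mat n n" "M * Q = 1\<^sub>m n" "Q * M = 1\<^sub>m n"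
  using det_non_zero_imp_unit[OF assms, of "()"] unfolding Units_def ring_mat_def by auto

lemma mult_left_cancel_det_nonzero:
  assumes M: "(M::'k::field mat) \<in> carrier_mat n n" "det M \<noteq> 0"
    and X: "X \<in> carrier_mat n n" and Y: "Y \<in> carrier_mat n n" and eq: "M * X = M * Y"
  shows "X = Y"
proof -
  obtain Q where Q: "Q \<in> carrier_mat n n" "Q * M = 1\<^sub>m n"
    using inverse_mat_if_det_nonzero[OF M] by blast
  have "X = (Q * M) * X" unfolding Q(2) using X by simp
  also have "\<dots> = Q * (M * Y)" using Q(1) M X unfolding eq[symmetric] by simp
  also have "\<dots> = (Q * M) * Y" using Q(1) M Y by simp
  finally show ?thesis unfolding Q(2) using Y by simp
qed

lemma select_cols_mat_mult:
  fixes A :: "nat \<Rightarrow> nat \<Rightarrow> 'k::comm_ring_1"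
  assumes C: "C \<in> carrier_mat n n"
    and MC: "select_cols_mat n A F * C = select_cols_mat n A ({0..<n} - F)"
  shows "select_cols_mat n A F * select_cols_mat n (\<lambda>i j. C $$ (i, j)) W = select_cols_mat n A (F \<triangle> W)"
proof (rule eq_matI)
  let ?M = "select_cols_mat n A F" and ?C = "select_cols_mat n (\<lambda>i j. C $$ (i, j)) W"
  fix i j assume "i < dim_row (select_cols_mat n A (F \<triangle> W))" "j < dim_col (select_cols_mat n A (F \<triangle> W))"
  then have ij: "i < n" "j < n" by simp_all
  have entry: "(?M * ?C) $$ (i, j) = (\<Sum>k\<in>{0..<n}. ?M $$ (i, k) * ?C $$ (k, j))"
    using ij by (intro index_mult_mat_sum) simp_all
  show "(?M * ?C) $$ (i, j) = select_cols_mat n A (F \<triangle> W) $$ (i, j)"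
  proof (cases "j \<in> W")
    case True
    have "(?M * ?C) $$ (i, j) = (\<Sum>k\<in>{0..<n}. ?M $$ (i, k) * C $$ (k, j))"
      unfolding entry using True ij by (intro sum.cong) (simp_all add: index_select_cols_mat)
    also have "\<dots> = (?M * C) $$ (i, j)"
      using ij C by (intro index_mult_mat_sum[symmetric]) simp_all
    finally show ?thesis
      using True ij unfolding MC by (auto simp: index_select_cols_mat symdiff_def)
  next
    case False
    have "(?M * ?C) $$ (i, j) = (\<Sum>k\<in>{0..<n}. if k = j then ?M $$ (i, k) else 0)"
      unfolding entry using False ij by (intro sum.cong) (simp_all add: index_select_cols_mat)
    also have "\<dots> = ?M $$ (i, j)"
      using ij by simp
    finally show ?thesis
      using False ij by (auto simp: index_select_cols_mat symdiff_def)
  qed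
qed simp_all

lemma select_cols_mat_transpose_commute_char2:
  fixes A :: "nat \<Rightarrow> nat \<Rightarrow> 'k::comm_ring_1" and F :: "nat set"
  assumes c2: "CHAR('k) = 2" and sym: "\<And>i j. i < n \<Longrightarrow> j < n \<Longrightarrow> A i j = A j i"
  defines "M \<equiv> select_cols_mat n A F" and "N \<equiv> select_cols_mat n A ({0..<n} - F)"
  shows "N * transpose_mat M = M * transpose_mat N"
proof (rule eq_matI)
  fix i k assume "i < dim_row (M * transpose_mat N)" "k < dim_col (M * transpose_mat N)"
  then have ik: "i < n" "k < n" by (simp_all add: M_def N_def)
  have carrier: "M \<in> carrier_mat n n" "N \<in> carrier_mat n n"
    "transpose_mat M \<in> carrier_mat n n" "transpose_mat N \<in> carrier_mat n n"
    by (simp_all add: M_def N_def)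
  let ?a = "A i k"
  have "(N * transpose_mat M) $$ (i, k) = (\<Sum>j\<in>{0..<n}. N $$ (i, j) * M $$ (k, j))"
    using index_mult_mat_sum[OF carrier(2,3) ik] ik by (auto simp: M_def intro!: sum.cong)
  also have "\<dots> = (\<Sum>j\<in>{0..<n}. (if j = i \<and> i \<in> F then ?a else 0) + (if j = k \<and> k \<notin> F then ?a else 0))"
    using ik sym by (intro sum.cong) (auto simp: M_def N_def index_select_cols_mat)
  also have "\<dots> = (if i \<in> F then ?a else 0) + (if k \<in> F then 0 else ?a)"
    using ik by (simp add: sum.distrib)
  finally have NM: "(N * transpose_mat M) $$ (i, k) = (if i \<in> F then ?a else 0) + (if k \<in> F then 0 else ?a)" .
  have "(M * transpose_mat N) $$ (i, k) = (\<Sum>j\<in>{0..<n}. M $$ (i, j) * N $$ (k, j))"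
    using index_mult_mat_sum[OF carrier(1,4) ik] ik by (auto simp: N_def intro!: sum.cong)
  also have "\<dots> = (\<Sum>j\<in>{0..<n}. (if j = k \<and> k \<in> F then ?a else 0) + (if j = i \<and> i \<notin> F then ?a else 0))"
    using ik sym by (intro sum.cong) (auto simp: M_def N_def index_select_cols_mat)
  also have "\<dots> = (if k \<in> F then ?a else 0) + (if i \<in> F then 0 else ?a)"
    using ik by (simp add: sum.distrib)
  finally show "(N * transpose_mat M) $$ (i, k) = (M * transpose_mat N) $$ (i, k)"
    unfolding NM using char2_add_self[OF c2, of ?a] by (auto simp: add.commute)
qed (simp_all add: M_def N_def)

lemma mult_left_inverse_symmetric:
  fixes M N Q :: "'k::comm_ring_1 mat"
  assumes M: "M \<in> carrier_mat n n" and N: "N \<in> carrier_mat n n" and Q: "Q \<in> carrier_mat n n"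
    and QM: "Q * M = 1\<^sub>m n" and NM: "N * transpose_mat M = M * transpose_mat N"
  shows "transpose_mat (Q * N) = Q * N"
proof -
  have MQ: "transpose_mat M * transpose_mat Q = 1\<^sub>m n"
    using transpose_mult[OF Q M] QM by simp
  have "transpose_mat (Q * N) = (Q * M) * (transpose_mat N * transpose_mat Q)"
    using transpose_mult[OF Q N] N Q unfolding QM by simp
  also have "\<dots> = Q * ((M * transpose_mat N) * transpose_mat Q)"
    using M N Q by (simp add: assoc_mult_mat[of _ n n _ n _ n])
  also have "\<dots> = Q * (N * (transpose_mat M * transpose_mat Q))"
    unfolding NM[symmetric] using M N Q by (simp add: assoc_mult_mat[of _ n n _ n _ n])
  also have "\<dots> = Q * N" unfolding MQ using N by simp
  finally show ?thesis .
qed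

text \<open>P is the principal pivot transform of A on F, namely inv(M) * N where M and N keep the
  columns of A inside and outside F respectively; its symmetry is where characteristic 2 enters.\<close>

lemma symmetric_pivot_char2:
  fixes A :: "nat \<Rightarrow> nat \<Rightarrow> 'k::field"
  assumes c2: "CHAR('k) = 2" and sym: "\<And>i j. i < n \<Longrightarrow> j < n \<Longrightarrow> A i j = A j i"
    and F: "F \<subseteq> {0..<n}" and nz: "principal_det A F \<noteq> 0"
  obtains P where "\<And>i j. i < n \<Longrightarrow> j < n \<Longrightarrow> P i j = P j i"
    and "\<And>W. select_cols_mat n A F * select_cols_mat n P W = select_cols_mat n A (F \<triangle> W)"
proof -
  define M where "M = select_cols_mat n A F"
  define N where "N = select_cols_mat n A ({0..<n} - F)"
  have M: "M \<in> carrier_mat n n" and N: "N \<in> carrier_mat n n" by (simp_all add: M_def N_def)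
  have "det M \<noteq> 0" using nz det_select_cols_mat[OF F, of A] by (simp add: M_def)
  then obtain Q where Q: "Q \<in> carrier_mat n n" "M * Q = 1\<^sub>m n" "Q * M = 1\<^sub>m n"
    using inverse_mat_if_det_nonzero[OF M] by blast
  define C where "C = Q * N"
  have C: "C \<in> carrier_mat n n" using Q N by (simp add: C_def)
  have "M * C = (M * Q) * N" unfolding C_def using M Q(1) N by simp
  then have MC: "M * C = N" unfolding Q(2) using N by simp
  have CT: "transpose_mat C = C"
  proof -
    have "N * transpose_mat M = M * transpose_mat N"
      unfolding M_def N_def by (rule select_cols_mat_transpose_commute_char2[OF c2]) (simp add: sym)
    then show ?thesis
      unfolding C_def using M N Q(1,3) by (intro mult_left_inverse_symmetric)
  qed
  show ?thesis
  proof
    show "C $$ (i, j) = C $$ (j, i)" if "i < n" "j < n" for i j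
      using CT C that by (metis carrier_matD index_transpose_mat(1))
    show "select_cols_mat n A F * select_cols_mat n (\<lambda>i j. C $$ (i, j)) W = select_cols_mat n A (F \<triangle> W)" for W
      using select_cols_mat_mult[OF C] MC by (simp add: M_def N_def)
  qed
qed

lemma principal_det_symdiff_pivot:
  fixes A :: "nat \<Rightarrow> nat \<Rightarrow> 'k::comm_ring_1"
  assumes "F \<subseteq> {0..<n}" "W \<subseteq> {0..<n}"
    and "select_cols_mat n A F * select_cols_mat n P W = select_cols_mat n A (F \<triangle> W)"
  shows "principal_det A (F \<triangle> W) = principal_det A F * principal_det P W"
proof -
  have "F \<triangle> W \<subseteq> {0..<n}" using assms(1,2) by (auto simp: symdiff_def)
  then have "principal_det A (F \<triangle> W) = det (select_cols_mat n A F * select_cols_mat n P W)"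
    by (simp add: det_select_cols_mat assms(3))
  also have "\<dots> = principal_det A F * principal_det P W"
    by (simp add: det_mult[OF select_cols_mat_carrier select_cols_mat_carrier] det_select_cols_mat assms(1,2))
  finally show ?thesis .
qed

text \<open>Pivoting on F and then on F \<triangle> G amounts to pivoting on G; comparing both sides after
  cancelling the nonsingular column selection of F shows that P and Q are inverse on F \<triangle> G.\<close>

lemma pivots_inverse_on_symdiff:
  fixes A :: "nat \<Rightarrow> nat \<Rightarrow> 'k::field"
  assumes F: "F \<subseteq> {0..<n}" and G: "G \<subseteq> {0..<n}" and nzF: "principal_det A F \<noteq> 0"
    and P: "\<And>W. select_cols_mat n A F * select_cols_mat n P W = select_cols_mat n A (F \<triangle> W)"
    and Q: "\<And>W. select_cols_mat n A G * select_cols_mat n Q W = select_cols_mat n A (G \<triangle> W)"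
    and k: "k \<in> F \<triangle> G" and x: "x \<in> F \<triangle> G"
  shows "(\<Sum>j\<in>F \<triangle> G. P k j * Q j x) = (if k = x then 1 else 0)"
proof -
  define V where "V = {0..<n}"
  define U where "U = F \<triangle> G"
  have UV: "U \<subseteq> V" using F G by (auto simp: U_def V_def symdiff_def)
  define X where "X = select_cols_mat n P U"
  define Y where "Y = select_cols_mat n P (V - U)"
  define Z where "Z = select_cols_mat n Q V"
  define M where "M = select_cols_mat n A F"
  have M: "M \<in> carrier_mat n n" and dM: "det M \<noteq> 0"
    using det_select_cols_mat[OF F, of A] nzF by (simp_all add: M_def)
  have "F \<triangle> U = G" "G \<triangle> V = F \<triangle> (V - U)"
    using F G by (auto simp: U_def V_def symdiff_def)
  then have "M * X * Z = M * Y"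
    using P[of U] P[of "V - U"] Q[of V] by (simp add: M_def X_def Y_def Z_def)
  also have "M * X * Z = M * (X * Z)"
    using M by (simp add: X_def Z_def assoc_mult_mat[of _ n n _ n _ n])
  finally have XZ: "X * Z = Y"
    by (rule mult_left_cancel_det_nonzero[OF M dM, rotated 2])
      (auto simp: X_def Y_def Z_def intro!: mult_carrier_mat[OF select_cols_mat_carrier select_cols_mat_carrier])
  have kx: "k < n" "x < n" "k \<in> U" "x \<in> U" using k x UV by (auto simp: U_def V_def)
  have "(\<Sum>j\<in>U. P k j * Q j x) = (\<Sum>j\<in>V. (if j \<in> U then P k j else if k = j then 1 else 0) * Q j x)"
    by (rule sum.mono_neutral_cong_left) (use UV kx in \<open>auto simp: V_def\<close>)
  also have "\<dots> = (\<Sum>j\<in>V. X $$ (k, j) * Z $$ (j, x))"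
    using kx by (intro sum.cong) (simp_all add: X_def Z_def index_select_cols_mat V_def)
  also have "\<dots> = (X * Z) $$ (k, x)"
    unfolding V_def using kx by (intro index_mult_mat_sum[symmetric]) (simp_all add: X_def Z_def)
  also have "\<dots> = (if k = x then 1 else 0)"
    using kx unfolding XZ by (simp add: Y_def index_select_cols_mat)
  finally show ?thesis unfolding U_def .
qed

section \<open>Exchange for mutually inverse symmetric matrices\<close>

lemma exchange_pair_zero_diagonal_char2:
  fixes a b :: "'b \<Rightarrow> 'b \<Rightarrow> 'k::field"
  assumes c2: "CHAR('k) = 2" and fin: "finite U" and x: "x \<in> U"
    and syma: "\<And>i j. i \<in> U \<Longrightarrow> j \<in> U \<Longrightarrow> a i j = a j i"
    and symb: "\<And>i j. i \<in> U \<Longrightarrow> j \<in> U \<Longrightarrow> b i j = b j i"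
    and inv: "\<And>k. k \<in> U \<Longrightarrow> (\<Sum>j\<in>U. a k j * b j x) = (if k = x then 1 else 0)"
    and axx: "a x x \<noteq> 0" and bxx: "b x x = 0"
  shows "\<exists>y\<in>U. y \<noteq> x \<and> a x x * a y y + a x y * a y x \<noteq> 0 \<and> b x y \<noteq> 0"
proof (rule ccontr)
  assume "\<not> ?thesis"
  then have degenerate: "a x x * a y y + a x y * a y x = 0"
    if "y \<in> U" "y \<noteq> x" "b x y \<noteq> 0" for y
    using that by blast
  define c where "c k = b k x" for k
  have "(\<Sum>k\<in>U. a k k * (c k)\<^sup>2) = (\<Sum>k\<in>U. \<Sum>i\<in>U. c k * a k i * c i)"
    by (rule quadratic_form_char2[OF c2 fin syma, symmetric])
  also have "\<dots> = (\<Sum>k\<in>U. c k * (\<Sum>i\<in>U. a k i * c i))"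
    by (simp add: sum_distrib_left mult.assoc)
  also have "\<dots> = (\<Sum>k\<in>U. if k = x then c k else 0)"
    using inv by (intro sum.cong) (auto simp: c_def)
  also have "\<dots> = 0" using fin x bxx by (simp add: c_def)
  finally have quadratic_form: "(\<Sum>k\<in>U. a k k * (c k)\<^sup>2) = 0" .
  have square: "a x x * (a k k * (c k)\<^sup>2) = (a x k * c k)\<^sup>2" if k: "k \<in> U" for k
  proof (cases "k = x \<or> c k = 0")
    case True
    then show ?thesis using bxx by (auto simp: c_def)
  next
    case False
    then have "a x x * a k k + a x k * a k x = 0"
      using degenerate[OF k] symb[OF x k] by (auto simp: c_def)
    then have minor: "a x x * a k k = a x k * a x k"
      using char2_uminus[OF c2, of "a x k * a k x"] syma[OF x k] by (simp add: add_eq_0_iff2)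
    have "a x x * (a k k * (c k)\<^sup>2) = (a x x * a k k) * (c k)\<^sup>2"
      by (simp only: mult.assoc)
    also have "\<dots> = (a x k * c k)\<^sup>2"
      unfolding minor by (simp add: power2_eq_square ac_simps)
    finally show ?thesis .
  qed
  have "0 = a x x * (\<Sum>k\<in>U. a k k * (c k)\<^sup>2)" by (simp add: quadratic_form)
  also have "\<dots> = (\<Sum>k\<in>U. (a x k * c k)\<^sup>2)"
    unfolding sum_distrib_left using square by (intro sum.cong) auto
  also have "\<dots> = (\<Sum>k\<in>U. a x k * c k)\<^sup>2"
    by (rule square_sum_char2[OF c2 fin, symmetric])
  also have "(\<Sum>k\<in>U. a x k * c k) = 1" using inv[OF x] by (simp add: c_def)
  finally show False by simp
qed

lemma exchange_pair_inverse_symmetric_char2: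
  fixes a b :: "'b \<Rightarrow> 'b \<Rightarrow> 'k::field"
  assumes c2: "CHAR('k) = 2" and fin: "finite U" and x: "x \<in> U"
    and syma: "\<And>i j. i \<in> U \<Longrightarrow> j \<in> U \<Longrightarrow> a i j = a j i"
    and symb: "\<And>i j. i \<in> U \<Longrightarrow> j \<in> U \<Longrightarrow> b i j = b j i"
    and ab: "\<And>k. k \<in> U \<Longrightarrow> (\<Sum>j\<in>U. a k j * b j x) = (if k = x then 1 else 0)"
    and ba: "\<And>k. k \<in> U \<Longrightarrow> (\<Sum>j\<in>U. b k j * a j x) = (if k = x then 1 else 0)"
  shows "\<exists>y\<in>U. principal_det a {x, y} \<noteq> 0 \<and> principal_det b {x, y} \<noteq> 0"
proof -
  have pa: "principal_det a {x, y} = a x x * a y y + a x y * a y x"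
    and pb: "principal_det b {x, y} = b x x * b y y + b x y * b y x" if "y \<noteq> x" for y
    using principal_det_doubleton_char2[OF c2] that by metis+
  consider "a x x \<noteq> 0" "b x x \<noteq> 0" | "a x x = 0" "b x x = 0"
    | "a x x \<noteq> 0" "b x x = 0" | "a x x = 0" "b x x \<noteq> 0"
    by blast
  then show ?thesis
  proof cases
    case 1
    then show ?thesis using x by (intro bexI[of _ x]) (auto simp: principal_det_singleton)
  next
    case 2
    have "(\<Sum>j\<in>U. a x j * b j x) \<noteq> 0" using ab[OF x] by simp
    then obtain y where y: "y \<in> U" "a x y * b y x \<noteq> 0" by (meson sum.neutral)
    then have "y \<noteq> x" using 2 by auto
    then show ?thesis
      using pa pb 2 y syma[OF x y(1)] symb[OF x y(1)] by (intro bexI[of _ y]) auto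
  next
    case 3
    then obtain y where y: "y \<in> U" "y \<noteq> x" "a x x * a y y + a x y * a y x \<noteq> 0" "b x y \<noteq> 0"
      using exchange_pair_zero_diagonal_char2[OF c2 fin x syma symb ab] by blast
    then show ?thesis using pa pb 3 symb[OF x y(1)] by (intro bexI[of _ y]) auto
  next
    case 4
    then obtain y where y: "y \<in> U" "y \<noteq> x" "b x x * b y y + b x y * b y x \<noteq> 0" "a x y \<noteq> 0"
      using exchange_pair_zero_diagonal_char2[OF c2 fin x symb syma ba] by blast
    then show ?thesis using pa pb 4 syma[OF x y(1)] by (intro bexI[of _ y]) auto
  qed
qed

lemma principal_det_exchange_nat_char2:
  fixes A :: "nat \<Rightarrow> nat \<Rightarrow> 'k::field"
  assumes c2: "CHAR('k) = 2" and sym: "\<And>i j. i < n \<Longrightarrow> j < n \<Longrightarrow> A i j = A j i"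
    and F: "F \<subseteq> {0..<n}" and G: "G \<subseteq> {0..<n}"
    and nzF: "principal_det A F \<noteq> 0" and nzG: "principal_det A G \<noteq> 0"
    and x: "x \<in> F \<triangle> G"
  shows "\<exists>y\<in>F \<triangle> G. principal_det A (F \<triangle> {x, y}) \<noteq> 0 \<and> principal_det A (G \<triangle> {x, y}) \<noteq> 0"
proof -
  obtain P where symP: "\<And>i j. i < n \<Longrightarrow> j < n \<Longrightarrow> P i j = P j i"
    and P: "\<And>W. select_cols_mat n A F * select_cols_mat n P W = select_cols_mat n A (F \<triangle> W)"
    using symmetric_pivot_char2[OF c2 sym F nzF] by blast
  obtain Q where symQ: "\<And>i j. i < n \<Longrightarrow> j < n \<Longrightarrow> Q i j = Q j i"
    and Q: "\<And>W. select_cols_mat n A G * select_cols_mat n Q W = select_cols_mat n A (G \<triangle> W)"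
    using symmetric_pivot_char2[OF c2 sym G nzG] by blast
  define U where "U = F \<triangle> G"
  have U: "U \<subseteq> {0..<n}" "G \<triangle> F = U" using F G by (auto simp: U_def symdiff_def)
  obtain y where y: "y \<in> U" "principal_det P {x, y} \<noteq> 0" "principal_det Q {x, y} \<noteq> 0"
  proof (rule exchange_pair_inverse_symmetric_char2[OF c2, of U x P Q, THEN bexE])
    show "finite U" using U(1) finite_subset by blast
    show "x \<in> U" using x by (simp add: U_def)
    show "P i j = P j i" if "i \<in> U" "j \<in> U" for i j
      using that U(1) by (intro symP) auto
    show "Q i j = Q j i" if "i \<in> U" "j \<in> U" for i j
      using that U(1) by (intro symQ) auto
    show "(\<Sum>j\<in>U. P k j * Q j x) = (if k = x then 1 else 0)" if "k \<in> U" for k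
      using pivots_inverse_on_symdiff[OF F G nzF P Q] that x by (simp add: U_def)
    show "(\<Sum>j\<in>U. Q k j * P j x) = (if k = x then 1 else 0)" if "k \<in> U" for k
      using pivots_inverse_on_symdiff[OF G F nzG Q P] that x U(2) by (simp add: U_def)
  qed blast
  have xy: "{x, y} \<subseteq> {0..<n}" using x y(1) U(1) by (auto simp: U_def)
  show ?thesis
    using y nzF nzG principal_det_symdiff_pivot[OF F xy P] principal_det_symdiff_pivot[OF G xy Q]
    by (intro bexI[of _ y]) (auto simp: U_def)
qed

lemma image_symdiff:
  assumes "inj_on f C" "A \<subseteq> C" "B \<subseteq> C"
  shows "f ` (A \<triangle> B) = f ` A \<triangle> f ` B"
proof -
  have "f ` (A - B) = f ` A - f ` B" "f ` (B - A) = f ` B - f ` A"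
    by (rule inj_on_image_set_diff[OF assms(1)]; use assms(2,3) in blast)+
  then show ?thesis by (simp add: symdiff_def image_Un)
qed

lemma principal_det_reindex_nat_char2:
  fixes A :: "'a \<Rightarrow> 'a \<Rightarrow> 'k::comm_ring_1"
  assumes c2: "CHAR('k) = 2" and "finite E"
  obtains n and g :: "'a \<Rightarrow> nat" and A' :: "nat \<Rightarrow> nat \<Rightarrow> 'k"
  where "bij_betw g E {0..<n}" and "symmetric_on {0..<n} A' \<longleftrightarrow> symmetric_on E A"
    and "\<And>S. S \<subseteq> E \<Longrightarrow> principal_det A S = principal_det A' (g ` S)"
proof -
  define n where "n = card E"
  obtain h where h: "bij_betw h {0..<n} E"
    using ex_bij_betw_nat_finite[OF assms(2)] unfolding n_def by blast
  define g where "g = inv_into {0..<n} h"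
  define A' where "A' i j = A (h i) (h j)" for i j
  have g: "bij_betw g E {0..<n}"
    unfolding g_def using h by (rule bij_betw_inv_into)
  have img: "E = h ` {0..<n}" using h by (simp add: bij_betw_def)
  have "symmetric_on {0..<n} A' \<longleftrightarrow> symmetric_on E A"
    unfolding symmetric_on_def A'_def img by blast
  moreover have "principal_det A S = principal_det A' (g ` S)" if "S \<subseteq> E" for S
  proof -
    have "g ` S \<subseteq> {0..<n}" using bij_betwE[OF g] that by blast
    moreover have "h ` g ` S = S"
      unfolding g_def using that img by (intro image_inv_into_cancel) auto
    ultimately show ?thesis
      unfolding A'_def using principal_det_image_char2[OF c2 inj_on_subset[OF bij_betw_imp_inj_on[OF h]]]
      by metis
  qed
  ultimately show ?thesis using that g by blast
qed

lemma principal_det_exchange_char2: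
  fixes A :: "'a \<Rightarrow> 'a \<Rightarrow> 'k::field"
  assumes c2: "CHAR('k) = 2" and "finite E" and sym: "symmetric_on E A"
    and I: "I \<subseteq> E" and J: "J \<subseteq> E"
    and nzI: "principal_det A I \<noteq> 0" and nzJ: "principal_det A J \<noteq> 0"
    and x: "x \<in> I \<triangle> J"
  shows "\<exists>y\<in>I \<triangle> J. principal_det A (I \<triangle> {x, y}) \<noteq> 0 \<and> principal_det A (J \<triangle> {x, y}) \<noteq> 0"
proof -
  obtain n g and A' :: "nat \<Rightarrow> nat \<Rightarrow> 'k" where g: "bij_betw g E {0..<n}"
    and sym': "symmetric_on {0..<n} A'"
    and transfer: "\<And>S. S \<subseteq> E \<Longrightarrow> principal_det A S = principal_det A' (g ` S)"
    using principal_det_reindex_nat_char2[OF c2 assms(2)] sym by metis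
  have g_sub: "g ` S \<subseteq> {0..<n}" if "S \<subseteq> E" for S
    using bij_betwE[OF g] that by blast
  have g_symdiff: "g ` (S \<triangle> T) = g ` S \<triangle> g ` T" if "S \<subseteq> E" "T \<subseteq> E" for S T
    using image_symdiff[OF bij_betw_imp_inj_on[OF g] that] .
  have "A' i j = A' j i" if "i < n" "j < n" for i j
    using sym' that by (simp add: symmetric_on_def)
  moreover have "principal_det A' (g ` I) \<noteq> 0" "principal_det A' (g ` J) \<noteq> 0"
    using nzI nzJ transfer[OF I] transfer[OF J] by simp_all
  moreover have "g x \<in> g ` I \<triangle> g ` J"
    using x g_symdiff[OF I J] by blast
  ultimately obtain y' where y': "y' \<in> g ` I \<triangle> g ` J"
    "principal_det A' (g ` I \<triangle> {g x, y'}) \<noteq> 0" "principal_det A' (g ` J \<triangle> {g x, y'}) \<noteq> 0"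
    using principal_det_exchange_nat_char2[where A = A', OF c2 _ g_sub[OF I] g_sub[OF J]] by blast
  then obtain y where y: "y \<in> I \<triangle> J" "y' = g y"
    using g_symdiff[OF I J] by auto
  have xy: "{x, y} \<subseteq> E" using x y(1) I J by (auto simp: symdiff_def)
  have "I \<triangle> {x, y} \<subseteq> E" "J \<triangle> {x, y} \<subseteq> E" using I J xy by (auto simp: symdiff_def)
  then show ?thesis
    using y y' g_symdiff[OF I xy] g_symdiff[OF J xy] by (intro bexI[of _ y]) (simp_all add: transfer)
qed

section \<open>Strong Delta-matroids\<close>

definition strong_exchange :: "'a set set \<Rightarrow> bool" where
  "strong_exchange Bs \<longleftrightarrow>
    (\<forall>B\<in>Bs. \<forall>B'\<in>Bs. \<forall>x\<in>B \<triangle> B'. \<exists>y\<in>B \<triangle> B'. B \<triangle> {x, y} \<in> Bs \<and> B' \<triangle> {x, y} \<in> Bs)"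

lemma strong_delta_matroid_iff:
  "strong_delta_matroid E Bs \<longleftrightarrow> finite E \<and> Bs \<noteq> {} \<and> (\<forall>B\<in>Bs. B \<subseteq> E) \<and> strong_exchange Bs"
  unfolding strong_delta_matroid_def strong_exchange_def ..

lemma strong_exchange_DA_bases_char2:
  fixes A :: "'a \<Rightarrow> 'a \<Rightarrow> 'k::field"
  assumes "CHAR('k) = 2" "finite E" "symmetric_on E A"
  shows "strong_exchange (DA_bases E A)"
  unfolding strong_exchange_def
proof (intro ballI)
  fix I J x assume "I \<in> DA_bases E A" "J \<in> DA_bases E A" and x: "x \<in> I \<triangle> J"
  then have I: "I \<subseteq> E" "principal_det A I \<noteq> 0" and J: "J \<subseteq> E" "principal_det A J \<noteq> 0"
    by (simp_all add: DA_bases_def)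
  then obtain y where y: "y \<in> I \<triangle> J"
    "principal_det A (I \<triangle> {x, y}) \<noteq> 0" "principal_det A (J \<triangle> {x, y}) \<noteq> 0"
    using principal_det_exchange_char2[OF assms I(1) J(1) I(2) J(2) x] by blast
  have "{x, y} \<subseteq> E" using x y(1) I(1) J(1) by (auto simp: symdiff_def)
  then show "\<exists>y\<in>I \<triangle> J. I \<triangle> {x, y} \<in> DA_bases E A \<and> J \<triangle> {x, y} \<in> DA_bases E A"
    using y I(1) J(1) by (auto simp: DA_bases_def symdiff_def)
qed

lemma strong_exchange_twist:
  assumes "strong_exchange Bs"
  shows "strong_exchange (twist Bs X)"
  unfolding strong_exchange_def
proof (intro ballI)
  fix B B' x assume B: "B \<in> twist Bs X" and B': "B' \<in> twist Bs X" and x: "x \<in> B \<triangle> B'"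
  obtain I where I: "I \<in> Bs" "B = I \<triangle> X" using B unfolding twist_def by blast
  obtain J where J: "J \<in> Bs" "B' = J \<triangle> X" using B' unfolding twist_def by blast
  have BB': "B \<triangle> B' = I \<triangle> J" unfolding I(2) J(2) symdiff_def by blast
  have shift: "(S \<triangle> X) \<triangle> T = (S \<triangle> T) \<triangle> X" for S T :: "'a set" unfolding symdiff_def by blast
  have twistI: "S \<triangle> X \<in> twist Bs X" if "S \<in> Bs" for S using that unfolding twist_def by blast
  obtain y where y: "y \<in> I \<triangle> J" "I \<triangle> {x, y} \<in> Bs" "J \<triangle> {x, y} \<in> Bs"
    using assms I(1) J(1) x unfolding strong_exchange_def BB' by blast
  show "\<exists>y\<in>B \<triangle> B'. B \<triangle> {x, y} \<in> twist Bs X \<and> B' \<triangle> {x, y} \<in> twist Bs X"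
    unfolding BB' unfolding I(2) J(2) shift by (intro bexI[of _ y] conjI twistI y)
qed

theorem proposition2p31:
  fixes E :: "'a set" and Bs :: "'a set set"
  assumes "CHAR('k::{field,finite}) = 2"
    and "delta_matroid E Bs"
    and "representable_over TYPE('k) E Bs"
  shows "strong_delta_matroid E Bs"
proof -
  from assms(3) obtain A :: "'a \<Rightarrow> 'a \<Rightarrow> 'k" and X
    where "symmetric_on E A \<or> skew_symmetric_on E A" and Bs: "Bs = twist (DA_bases E A) X"
    unfolding representable_over_def by blast
  then have "symmetric_on E A"
    using skew_symmetric_on_imp_symmetric_on_char2[OF assms(1)] by blast
  moreover have "finite E" using assms(2) by (simp add: delta_matroid_def)
  ultimately have "strong_exchange Bs"
    unfolding Bs by (intro strong_exchange_twist strong_exchange_DA_bases_char2 assms(1))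
  then show ?thesis
    using assms(2) by (simp add: strong_delta_matroid_iff delta_matroid_def)
qed

end
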